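(* Let $\mathcal{D}=(D,<,\approx)$ with $D$ infinite, $<$ a strict total order, and $\mathcal{D}$ dense and open. Let $l,r\in\mathbb{N}$. Then for every $(l,r)$-symbolic model $\rho$, the local projection $\rho_l$ is realized by some local model; that is, there is an infinite sequence $\sigma_l$ of maps $V_{\mathrm{local}}\to D$ with $\rho(i)\cap\Omega^l=\{c\in\Omega^l:\sigma_l,i\models c\}$ for all $i\in\mathbb{N}$.
   Context: $\mathcal{D}$ is dense if for all $d<d''$ in $D$ there is $d'$ with $d<d'<d''$. It is open if every $d'\in D$ has some $d<d'<d''$ in $D$. $V=V_{\mathrm{local}}\uplus V_{\mathrm{remote}}$ is a disjoint union of finite variable sets. Constraint semantics: - $\sigma,n\models\mathbf{X}^ix\approx\mathbf{X}^jy$ iff $\sigma(n+i)(x)=\sigma(n+j)(y)$. - $\sigma,n\models\mathbf{X}^ix<\mathbf{X}^jy$ iff $\sigma(n+i)(x)<\sigma(n+j)(y)$. - $\sigma,n\models\mathbf{X}^i(x\approx\mathbf{XF}y)$ iff there is $k>n+i$ with $\sigma(n+i)(x)=\sigma(k)(y)$. $\Omega^l$ is the set of all $\mathbf{X}^ix\approx\mathbf{X}^jy$ and $\mathbf{X}^ix<\mathbf{X}^jy$ with $x,y\in V_{\mathrm{local}}$ and $i,j\in\{0,\dots,l\}$. $\Omega^r$ is the set of all $\mathbf{X}^ix\approx\mathbf{X}^jy$ and $\mathbf{X}^i(x\approx\mathbf{XF}y)$ with $x,y\in V_{\mathrm{remote}}$ and $i,j\in\{0,\dots,r\}$. An $l$-frame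 is a set $\{c\in\Omega^l:\sigma_l,0\models c\}$ for some infinite sequence $\sigma_l$ of maps $V_{\mathrm{local}}\to D$. An $r$-frame is a set $FR\subseteq\Omega^r$ satisfying the following conditions, for all remote variables and indices $\le r$. 1. $\mathbf{X}^ix\approx\mathbf{X}^ix\in FR$. 2. $\approx$-constraints in $FR$ are symmetric. 3. $\approx$-constraints in $FR$ are transitive. 4. Suppose $\mathbf{X}^ix\approx\mathbf{X}^jy\in FR$. - If $i=j$, then $\mathbf{X}^i(x\approx\mathbf{XF}z)\in FR$ iff $\mathbf{X}^j(y\approx\mathbf{XF}z)\in FR$. - If $i<j$, then $\mathbf{X}^i(x\approx\mathbf{XF}y)\in FR$. Moreover, $\mathbf{X}^i(x\approx\mathbf{XF}z)\in FR$ iff either $\mathbf{X}^j(y\approx\mathbf{XF}z)\in FR$ or $\mathbf{X}^ix\approx\mathbf{X}^{j'}z\in FR$ for some $i<j'\le j$. An $(l,r)$-frame is the union of an $l$-frame and an $r$-frame. A pair $(FR_1,FR_2)$ of $(l,r)$-frames is one-step consistent if, for all variables and all $0<i,j$ (within range): - $\mathbf{X}^ix\approx\mathbf{X}^jy\in FR_1$ iff $\mathbf{X}^{i-1}x\approx\mathbf{X}^{j-1}y\in FR_2$; - $\mathbf{X}^ix<\mathbf{X}^jy\in FR_1$ iff $\mathbf{X}^{i-1}x<\mathbf{X}^{j-1}y\in FR_2$; - $\mathbf{X}^i(x\approx\mathbf{XF}y)\in FR_1$ iff $\mathbf{X}^{i-1}(x\approx\mathbf{XF}y)\in FR_2$.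 An $(l,r)$-symbolic model is an infinite sequence of $(l,r)$-frames with each consecutive pair one-step consistent. Its local projection is $\rho_l(i)=\rho(i)\cap\Omega^l$. *)

theory Defs
  imports Main
begin

text \<open>Constraints over variables of type 'v.
  CEq i x j y   stands for  X^i x \<approx> X^j y,
  CLess i x j y stands for  X^i x < X^j y,
  CEqF i x y    stands for  X^i (x \<approx> XF y).\<close>

datatype 'v constr =
    CEq nat 'v nat 'v
  | CLess nat 'v nat 'v
  | CEqF nat 'v 'v

text \<open>Satisfaction of a constraint by a sequence of valuations at position n.
  The relation \<approx> of the domain is equality.\<close>

fun sat :: "(nat \<Rightarrow> 'v \<Rightarrow> 'd::linorder) \<Rightarrow> nat \<Rightarrow> 'v constr \<Rightarrow> bool" where
  "sat \<sigma> n (CEq i x j y) = (\<sigma> (n + i) x = \<sigma> (n + j) y)"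
| "sat \<sigma> n (CLess i x j y) = (\<sigma> (n + i) x < \<sigma> (n + j) y)"
| "sat \<sigma> n (CEqF i x y) = (\<exists>k > n + i. \<sigma> (n + i) x = \<sigma> k y)"

definition dense_dom :: "'d::linorder itself \<Rightarrow> bool" where
  "dense_dom _ = (\<forall>a b :: 'd. a < b \<longrightarrow> (\<exists>c. a < c \<and> c < b))"

definition open_dom :: "'d::linorder itself \<Rightarrow> bool" where
  "open_dom _ = (\<forall>d :: 'd. \<exists>a b. a < d \<and> d < b)"

definition Omega_l :: "'v set \<Rightarrow> nat \<Rightarrow> 'v constr set" where
  "Omega_l Vl l =
     {CEq i x j y | i x j y. x \<in> Vl \<and> y \<in> Vl \<and> i \<le> l \<and> j \<le> l} \<union>
     {CLess i x j y | i x j y. x \<in> Vl \<and> y \<in> Vl \<and> i \<le> l \<and> j \<le> l}"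

definition Omega_r :: "'v set \<Rightarrow> nat \<Rightarrow> 'v constr set" where
  "Omega_r Vr r =
     {CEq i x j y | i x j y. x \<in> Vr \<and> y \<in> Vr \<and> i \<le> r \<and> j \<le> r} \<union>
     {CEqF i x y | i x y. x \<in> Vr \<and> y \<in> Vr \<and> i \<le> r}"

definition l_frame :: "'d::linorder itself \<Rightarrow> 'v set \<Rightarrow> nat \<Rightarrow> 'v constr set \<Rightarrow> bool" where
  "l_frame _ Vl l F =
     (\<exists>\<sigma> :: nat \<Rightarrow> 'v \<Rightarrow> 'd. F = {c \<in> Omega_l Vl l. sat \<sigma> 0 c})"

definition r_frame :: "'v set \<Rightarrow> nat \<Rightarrow> 'v constr set \<Rightarrow> bool" where
  "r_frame Vr r FR =
     (FR \<subseteq> Omega_r Vr r \<and>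
      (\<forall>x\<in>Vr. \<forall>i\<le>r. CEq i x i x \<in> FR) \<and>
      (\<forall>x\<in>Vr. \<forall>y\<in>Vr. \<forall>i\<le>r. \<forall>j\<le>r.
          CEq i x j y \<in> FR \<longrightarrow> CEq j y i x \<in> FR) \<and>
      (\<forall>x\<in>Vr. \<forall>y\<in>Vr. \<forall>z\<in>Vr. \<forall>i\<le>r. \<forall>j\<le>r. \<forall>k\<le>r.
          CEq i x j y \<in> FR \<longrightarrow> CEq j y k z \<in> FR \<longrightarrow> CEq i x k z \<in> FR) \<and>
      (\<forall>x\<in>Vr. \<forall>y\<in>Vr. \<forall>i\<le>r. \<forall>j\<le>r. CEq i x j y \<in> FR \<longrightarrow>
          ((i = j \<longrightarrow> (\<forall>z\<in>Vr. CEqF i x z \<in> FR \<longleftrightarrow> CEqF j y z \<in> FR)) \<and>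
           (i < j \<longrightarrow> CEqF i x y \<in> FR \<and>
              (\<forall>z\<in>Vr. CEqF i x z \<in> FR \<longleftrightarrow>
                 (CEqF j y z \<in> FR \<or> (\<exists>j'. i < j' \<and> j' \<le> j \<and> CEq i x j' z \<in> FR)))))))"

definition lr_frame :: "'d::linorder itself \<Rightarrow> 'v set \<Rightarrow> 'v set \<Rightarrow> nat \<Rightarrow> nat \<Rightarrow> 'v constr set \<Rightarrow> bool" where
  "lr_frame T Vl Vr l r F =
     (\<exists>A B. l_frame T Vl l A \<and> r_frame Vr r B \<and> F = A \<union> B)"

definition one_step_consistent ::
  "'v set \<Rightarrow> 'v set \<Rightarrow> nat \<Rightarrow> nat \<Rightarrow> 'v constr set \<Rightarrow> 'v constr set \<Rightarrow> bool" where
  "one_step_consistent Vl Vr l r F1 F2 =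
     (let \<Omega> = Omega_l Vl l \<union> Omega_r Vr r in
      (\<forall>x y i j. 0 < i \<and> 0 < j \<and> CEq i x j y \<in> \<Omega> \<longrightarrow>
         (CEq i x j y \<in> F1 \<longleftrightarrow> CEq (i - 1) x (j - 1) y \<in> F2)) \<and>
      (\<forall>x y i j. 0 < i \<and> 0 < j \<and> CLess i x j y \<in> \<Omega> \<longrightarrow>
         (CLess i x j y \<in> F1 \<longleftrightarrow> CLess (i - 1) x (j - 1) y \<in> F2)) \<and>
      (\<forall>x y i. 0 < i \<and> CEqF i x y \<in> \<Omega> \<longrightarrow>
         (CEqF i x y \<in> F1 \<longleftrightarrow> CEqF (i - 1) x y \<in> F2)))"

definition symbolic_model ::
  "'d::linorder itself \<Rightarrow> 'v set \<Rightarrow> 'v set \<Rightarrow> nat \<Rightarrow> nat \<Rightarrow> (nat \<Rightarrow> 'v constr set) \<Rightarrow> bool" where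
  "symbolic_model T Vl Vr l r \<rho> =
     (\<forall>n. lr_frame T Vl Vr l r (\<rho> n) \<and> one_step_consistent Vl Vr l r (\<rho> n) (\<rho> (Suc n)))"

end

theory Submission
  imports Defs
begin

text \<open>Only the order type of the finitely many values in a window of length \<open>l + 1\<close>
  matters for the local constraints. Each frame of \<open>\<rho>\<close> is realised by some valuation,
  and one-step consistency says that the realisations of consecutive frames induce the
  same order type on their overlap. In a dense order without endpoints an order type on
  a finite set can be extended one point at a time, so the valuation built so far can be
  continued by one position to realise the next frame; the diagonal of this coherent
  sequence of valuations realises every frame.\<close>

lemma exists_between_finite:
  fixes L U :: "'d::linorder set"
  assumes "dense_dom TYPE('d)" "open_dom TYPE('d)" "finite L" "finite U"
    and "\<forall>a\<in>L. \<forall>b\<in>U. a < b"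
  shows "\<exists>c. (\<forall>a\<in>L. a < c) \<and> (\<forall>b\<in>U. c < b)"
proof (cases "L = {}")
  case True
  obtain c where "c < Min U" using assms(2) unfolding open_dom_def by blast
  then show ?thesis using True assms(4) by (meson Min_le order_less_le_trans empty_iff)
next
  case L: False
  show ?thesis
  proof (cases "U = {}")
    case True
    obtain c where "Max L < c" using assms(2) unfolding open_dom_def by blast
    then show ?thesis using True L assms(3) by (meson Max_ge order_le_less_trans empty_iff)
  next
    case False
    have "Max L < Min U" using assms L False by simp
    then obtain c where "Max L < c" "c < Min U" using assms(1) unfolding dense_dom_def by blast
    then show ?thesis using assms(3,4) L False
      by (meson Max_ge Min_le order_le_less_trans order_less_le_trans)
  qed
qed

definition order_equiv_on :: "'p set \<Rightarrow> ('p \<Rightarrow> 'a::linorder) \<Rightarrow> ('p \<Rightarrow> 'b::linorder) \<Rightarrow> bool" where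
  "order_equiv_on S u w \<longleftrightarrow>
     (\<forall>p\<in>S. \<forall>q\<in>S. (u p = u q \<longleftrightarrow> w p = w q) \<and> (u p < u q \<longleftrightarrow> w p < w q))"

lemma order_equiv_onD:
  "order_equiv_on S u w \<Longrightarrow> p \<in> S \<Longrightarrow> q \<in> S \<Longrightarrow>
     (u p = u q \<longleftrightarrow> w p = w q) \<and> (u p < u q \<longleftrightarrow> w p < w q)"
  unfolding order_equiv_on_def by simp

lemma exists_order_equiv_value:
  fixes u :: "'p \<Rightarrow> 'a::linorder" and w :: "'p \<Rightarrow> 'd::linorder"
  assumes "dense_dom TYPE('d)" "open_dom TYPE('d)" "finite S" "order_equiv_on S u w"
  shows "\<exists>c. \<forall>p\<in>S. (u p = u q \<longleftrightarrow> w p = c) \<and> (u p < u q \<longleftrightarrow> w p < c)"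
proof (cases "\<exists>p0\<in>S. u p0 = u q")
  case True
  then obtain p0 where p0: "p0 \<in> S" "u p0 = u q" by blast
  have "(u p = u q \<longleftrightarrow> w p = w p0) \<and> (u p < u q \<longleftrightarrow> w p < w p0)" if "p \<in> S" for p
    using order_equiv_onD[OF assms(4) that p0(1)] p0(2) by simp
  then show ?thesis by blast
next
  case False
  define L where "L = w ` {p\<in>S. u p < u q}"
  define U where "U = w ` {p\<in>S. u q < u p}"
  have "a < b" if ab: "a \<in> L" "b \<in> U" for a b
  proof -
    obtain p p' where "p \<in> S" "p' \<in> S" "u p < u q" "u q < u p'" "a = w p" "b = w p'"
      using ab unfolding L_def U_def by blast
    then show "a < b" using order_equiv_onD[OF assms(4), of p p'] by auto
  qed
  moreover have "finite L" "finite U" using assms(3) unfolding L_def U_def by simp_all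
  ultimately obtain c where c: "\<forall>a\<in>L. a < c" "\<forall>b\<in>U. c < b"
    using exists_between_finite[OF assms(1,2)] by meson
  have "(u p = u q \<longleftrightarrow> w p = c) \<and> (u p < u q \<longleftrightarrow> w p < c)" if "p \<in> S" for p
  proof (cases "u p < u q")
    case True
    then have "w p \<in> L" using that unfolding L_def by blast
    then show ?thesis using c(1) True by auto
  next
    case notless: False
    then have "u q < u p" using False that by auto
    then have "w p \<in> U" using that unfolding U_def by blast
    then show ?thesis using c(2) notless \<open>u q < u p\<close> by auto
  qed
  then show ?thesis by blast
qed

lemma order_equiv_on_insert_fun_upd:
  fixes u :: "'p \<Rightarrow> 'a::linorder" and w :: "'p \<Rightarrow> 'b::linorder"
  assumes "order_equiv_on S u w" "q \<notin> S"
    and "\<forall>p\<in>S. (u p = u q \<longleftrightarrow> w p = c) \<and> (u p < u q \<longleftrightarrow> w p < c)"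
  shows "order_equiv_on (insert q S) u (w(q := c))"
  using assms unfolding order_equiv_on_def by (auto simp: not_less_iff_gr_or_eq)

lemma order_equiv_on_extend:
  fixes u :: "'p \<Rightarrow> 'a::linorder" and w :: "'p \<Rightarrow> 'd::linorder"
  assumes "dense_dom TYPE('d)" "open_dom TYPE('d)" "finite S" "S \<subseteq> T" "finite T"
    and "order_equiv_on S u w"
  shows "\<exists>w'. (\<forall>p\<in>S. w' p = w p) \<and> order_equiv_on T u w'"
proof -
  have "\<exists>w'. (\<forall>p\<in>S. w' p = w p) \<and> order_equiv_on (S \<union> R) u w'" if "finite R" for R
    using that
  proof (induction R rule: finite_induct)
    case empty
    then show ?case using assms(6) by auto
  next
    case (insert q R)
    then obtain w1 where w1: "\<forall>p\<in>S. w1 p = w p" "order_equiv_on (S \<union> R) u w1" by blast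
    show ?case
    proof (cases "q \<in> S \<union> R")
      case True
      then show ?thesis using w1 by (metis Un_insert_right insert_absorb)
    next
      case False
      obtain c where "\<forall>p\<in>S \<union> R. (u p = u q \<longleftrightarrow> w1 p = c) \<and> (u p < u q \<longleftrightarrow> w1 p < c)"
        using exists_order_equiv_value[OF assms(1,2) _ w1(2)] assms(3) insert(1) by blast
      then have "order_equiv_on (S \<union> insert q R) u (w1(q := c))"
        using order_equiv_on_insert_fun_upd[OF w1(2) False] by simp
      moreover have "\<forall>p\<in>S. (w1(q := c)) p = w p" using w1(1) False by simp
      ultimately show ?thesis by blast
    qed
  qed
  then show ?thesis using assms(4,5) by (metis sup.absorb2)
qed

definition realizes_local ::
  "'v set \<Rightarrow> nat \<Rightarrow> (nat \<Rightarrow> 'v \<Rightarrow> 'd::linorder) \<Rightarrow> nat \<Rightarrow> 'v constr set \<Rightarrow> bool" where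
  "realizes_local Vl l \<sigma> n F \<longleftrightarrow> (\<forall>c\<in>Omega_l Vl l. c \<in> F \<longleftrightarrow> sat \<sigma> n c)"

lemma realizes_local_iff:
  "realizes_local Vl l \<sigma> n F \<longleftrightarrow> F \<inter> Omega_l Vl l = {c \<in> Omega_l Vl l. sat \<sigma> n c}"
  unfolding realizes_local_def by blast

definition window :: "(nat \<Rightarrow> 'v \<Rightarrow> 'd) \<Rightarrow> nat \<Rightarrow> nat \<times> 'v \<Rightarrow> 'd" where
  "window \<sigma> n = (\<lambda>(i, x). \<sigma> (n + i) x)"

lemma sat_Omega_l_eq_if_order_equiv:
  assumes "order_equiv_on ({..l} \<times> Vl) (window \<sigma> n) (window \<tau> m)" "c \<in> Omega_l Vl l"
  shows "sat \<sigma> n c = sat \<tau> m c"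
  using assms unfolding Omega_l_def order_equiv_on_def window_def by fastforce

lemma order_equiv_on_windows_if_agree:
  assumes "\<forall>i\<le>l. \<sigma> (n + i) = \<tau> (m + i)"
  shows "order_equiv_on ({..l} \<times> Vl) (window \<sigma> n) (window \<tau> m)"
  using assms unfolding order_equiv_on_def window_def by auto

lemma Omega_l_Omega_r_disjoint: "Vl \<inter> Vr = {} \<Longrightarrow> Omega_l Vl l \<inter> Omega_r Vr r = {}"
  unfolding Omega_l_def Omega_r_def by blast

lemma lr_frame_realizes_local:
  assumes "Vl \<inter> Vr = {}" "lr_frame TYPE('d::linorder) Vl Vr l r F"
  shows "\<exists>\<tau> :: nat \<Rightarrow> 'v \<Rightarrow> 'd. realizes_local Vl l \<tau> 0 F"
proof -
  obtain A B where AB: "l_frame TYPE('d) Vl l A" "r_frame Vr r B" "F = A \<union> B"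
    using assms(2) unfolding lr_frame_def by blast
  obtain \<tau> :: "nat \<Rightarrow> 'v \<Rightarrow> 'd" where A: "A = {c \<in> Omega_l Vl l. sat \<tau> 0 c}"
    using AB(1) unfolding l_frame_def by blast
  have "B \<subseteq> Omega_r Vr r" using AB(2) unfolding r_frame_def by (elim conjE)
  then show ?thesis using A AB(3) Omega_l_Omega_r_disjoint[OF assms(1)]
    unfolding realizes_local_def by blast
qed

lemma one_step_consistent_local:
  assumes "one_step_consistent Vl Vr l r F1 F2" "i < l" "j < l" "x \<in> Vl" "y \<in> Vl"
  shows "CEq (Suc i) x (Suc j) y \<in> F1 \<longleftrightarrow> CEq i x j y \<in> F2"
    and "CLess (Suc i) x (Suc j) y \<in> F1 \<longleftrightarrow> CLess i x j y \<in> F2"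
proof -
  have "CEq (Suc i) x (Suc j) y \<in> Omega_l Vl l" "CLess (Suc i) x (Suc j) y \<in> Omega_l Vl l"
    using assms(2-5) unfolding Omega_l_def by auto
  then show "CEq (Suc i) x (Suc j) y \<in> F1 \<longleftrightarrow> CEq i x j y \<in> F2"
    and "CLess (Suc i) x (Suc j) y \<in> F1 \<longleftrightarrow> CLess i x j y \<in> F2"
    using assms(1) unfolding one_step_consistent_def Let_def by force+
qed

lemma order_equiv_on_overlap:
  assumes "one_step_consistent Vl Vr l r F1 F2"
    and "realizes_local Vl l \<sigma> n F1" "realizes_local Vl l \<tau> 0 F2"
  shows "order_equiv_on ({..<l} \<times> Vl) (window \<tau> 0) (window \<sigma> (Suc n))"
  unfolding order_equiv_on_def
proof (clarsimp)
  fix i x j y assume ij: "i < l" "x \<in> Vl" "j < l" "y \<in> Vl"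
  then have "CEq (Suc i) x (Suc j) y \<in> Omega_l Vl l" "CLess (Suc i) x (Suc j) y \<in> Omega_l Vl l"
    "CEq i x j y \<in> Omega_l Vl l" "CLess i x j y \<in> Omega_l Vl l"
    unfolding Omega_l_def by auto
  then show "(window \<tau> 0 (i, x) = window \<tau> 0 (j, y) \<longleftrightarrow>
              window \<sigma> (Suc n) (i, x) = window \<sigma> (Suc n) (j, y)) \<and>
             (window \<tau> 0 (i, x) < window \<tau> 0 (j, y) \<longleftrightarrow>
              window \<sigma> (Suc n) (i, x) < window \<sigma> (Suc n) (j, y))"
    using assms(2,3) one_step_consistent_local[OF assms(1) ij(1,3,2,4)]
    unfolding realizes_local_def window_def by simp
qed

lemma realizes_local_continue:
  fixes \<sigma> \<tau> :: "nat \<Rightarrow> 'v \<Rightarrow> 'd::linorder"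
  assumes "dense_dom TYPE('d)" "open_dom TYPE('d)" "finite Vl"
    and "one_step_consistent Vl Vr l r F1 F2"
    and "realizes_local Vl l \<sigma> n F1" "realizes_local Vl l \<tau> 0 F2"
  shows "\<exists>\<sigma>'. (\<forall>p \<le> n + l. \<sigma>' p = \<sigma> p) \<and> realizes_local Vl l \<sigma>' (Suc n) F2"
proof -
  obtain w where w: "\<forall>p\<in>{..<l} \<times> Vl. w p = window \<sigma> (Suc n) p"
    "order_equiv_on ({..l} \<times> Vl) (window \<tau> 0) w"
    using order_equiv_on_extend[OF assms(1,2) _ _ _ order_equiv_on_overlap[OF assms(4-6)],
        of "{..l} \<times> Vl"] assms(3) by fastforce
  define \<sigma>' where "\<sigma>' = (\<lambda>p. if p \<le> n + l then \<sigma> p else (\<lambda>x. w (p - Suc n, x)))"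
  have "window \<sigma>' (Suc n) p = w p" if "p \<in> {..l} \<times> Vl" for p
    using that w(1) unfolding \<sigma>'_def window_def by (cases p) auto
  then have "order_equiv_on ({..l} \<times> Vl) (window \<tau> 0) (window \<sigma>' (Suc n))"
    using w(2) unfolding order_equiv_on_def by simp
  then have "realizes_local Vl l \<sigma>' (Suc n) F2"
    using assms(6) sat_Omega_l_eq_if_order_equiv unfolding realizes_local_def by blast
  moreover have "\<forall>p \<le> n + l. \<sigma>' p = \<sigma> p" unfolding \<sigma>'_def by auto
  ultimately show ?thesis by blast
qed

lemma exists_coherent_sequence:
  fixes P :: "nat \<Rightarrow> (nat \<Rightarrow> 'a) \<Rightarrow> bool"
  assumes "P 0 \<sigma>0"
    and "\<And>n \<sigma>. P n \<sigma> \<Longrightarrow> \<exists>\<sigma>'. (\<forall>p \<le> n + l. \<sigma>' p = \<sigma> p) \<and> P (Suc n) \<sigma>'"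
  shows "\<exists>s. (\<forall>n. P n (s n)) \<and> (\<forall>n k. \<forall>p \<le> n + l. s (n + k) p = s n p)"
proof -
  obtain nxt where nxt: "\<And>n \<sigma>. P n \<sigma> \<Longrightarrow> (\<forall>p \<le> n + l. nxt n \<sigma> p = \<sigma> p) \<and> P (Suc n) (nxt n \<sigma>)"
    using assms(2) by metis
  define s where "s = rec_nat \<sigma>0 nxt"
  have P: "P n (s n)" for n
    by (induction n) (simp_all add: s_def assms(1) nxt)
  have "\<forall>p \<le> n + l. s (n + k) p = s n p" for n k
    by (induction k) (simp_all add: s_def nxt[OF P[unfolded s_def]])
  with P show ?thesis by blast
qed

theorem lemma2p2p3:
  fixes Vl Vr :: "'v set" and l r :: nat and \<rho> :: "nat \<Rightarrow> 'v constr set"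
  assumes "finite Vl" and "finite Vr" and "Vl \<inter> Vr = {}"
    and "infinite (UNIV :: 'd::linorder set)"
    and "dense_dom TYPE('d)" and "open_dom TYPE('d)"
    and "symbolic_model TYPE('d) Vl Vr l r \<rho>"
  shows "\<exists>\<sigma> :: nat \<Rightarrow> 'v \<Rightarrow> 'd. \<forall>i.
           \<rho> i \<inter> Omega_l Vl l = {c \<in> Omega_l Vl l. sat \<sigma> i c}"
proof -
  have frame: "\<exists>\<tau> :: nat \<Rightarrow> 'v \<Rightarrow> 'd. realizes_local Vl l \<tau> 0 (\<rho> n)" for n
    using assms(3,7) lr_frame_realizes_local unfolding symbolic_model_def by blast
  have osc: "one_step_consistent Vl Vr l r (\<rho> n) (\<rho> (Suc n))" for n
    using assms(7) unfolding symbolic_model_def by blast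
  have continue: "\<exists>\<sigma>'. (\<forall>p \<le> n + l. \<sigma>' p = \<sigma> p) \<and> realizes_local Vl l \<sigma>' (Suc n) (\<rho> (Suc n))"
    if "realizes_local Vl l \<sigma> n (\<rho> n)" for n and \<sigma> :: "nat \<Rightarrow> 'v \<Rightarrow> 'd"
    using frame[of "Suc n"] realizes_local_continue[OF assms(5,6,1) osc that] by blast
  obtain \<sigma>0 :: "nat \<Rightarrow> 'v \<Rightarrow> 'd" where "realizes_local Vl l \<sigma>0 0 (\<rho> 0)"
    using frame by blast
  from exists_coherent_sequence[OF this continue] obtain s :: "nat \<Rightarrow> nat \<Rightarrow> 'v \<Rightarrow> 'd"
    where s: "\<forall>n. realizes_local Vl l (s n) n (\<rho> n)" "\<forall>n k. \<forall>p \<le> n + l. s (n + k) p = s n p"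
    by blast
  have "realizes_local Vl l (\<lambda>p. s p p) i (\<rho> i)" for i
  proof -
    have "\<forall>j\<le>l. s i (i + j) = (\<lambda>p. s p p) (i + j)" using s(2) by simp
    then have "order_equiv_on ({..l} \<times> Vl) (window (s i) i) (window (\<lambda>p. s p p) i)"
      by (rule order_equiv_on_windows_if_agree)
    then show ?thesis
      using s(1) sat_Omega_l_eq_if_order_equiv unfolding realizes_local_def by blast
  qed
  then show ?thesis unfolding realizes_local_iff by blast
qed

end
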